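(* Let $\mathfrak R,\mathfrak R'$ be iterated graph systems satisfying (GR1)–(GR3), with replacement graphs $G_m$ and $G_m'$, and let $\varphi:\mathfrak R\to\mathfrak R'$ be a mapping between iterated graph systems. Then for every $m\in\mathbb N$ the map $\varphi_m:W_m\to W_m'$, $\varphi_m(w_1\cdots w_m):=\varphi(w_1)\cdots\varphi(w_m)$, is a mapping between the graphs $G_m\to G_m'$. If $\varphi$ is an isomorphism of iterated graph systems, then $\varphi_m:G_m\to G'_m$ is a graph isomorphism. Moreover, for every edge $\{w,v\}\in E(G_m)$, either $\varphi_m(w)=\varphi_m(v)$ or $|\varphi_m(w)\wedge\varphi_m(v)|=|w\wedge v|$.
   Context: A graph is a pair $(V,E)$ with $V$ finite non-empty and $E\subseteq V\times V$ such that $(x,y)\in E$ implies $(y,x)\notin E$; write $\{x,y\}\in E$ if $(x,y)\in E$ or $(y,x)\in E$. A mapping between graphs $\varphi:G\to G'$ is a function $V(G)\to V(G')$ such that for every $\{x,y\}\in E(G)$ either $\varphi(x)=\varphi(y)$ or $\{\varphi(x),\varphi(y)\}\in E(G')$; it is a graph isomorphism if it is bijective and $\varphi^{-1}$ is also a mapping between graphs. An iterated graph system (IGS) $\mathfrak R$ consists of a connected graph $G_1=(S,E)$, a finite set of types $\mathcal T$, a surjective typing $\mathfrak t:E\to\mathcal T$, and non-empty gluing rules $I_t\subseteq S\times S$ for $t\in\mathcal T$. With $W_m=S^m$, $[w]_k=w_1\cdots w_k$ and $|w\wedge v|=\min\{k:[w]_k\neq[v]_k\}$ for distinct equal-length words,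 the replacement graphs $G_m=(W_m,E_m)$ and their typings are defined recursively: $(w,v)\in E_{m+1}$ iff either (1) $[w]_m=[v]_m$ and $(w_{m+1},v_{m+1})\in E$ (type $\mathfrak t(w_{m+1},v_{m+1})$) or (2) $([w]_m,[v]_m)\in E_m$ and $(w_{m+1},v_{m+1})\in I_{\mathfrak t([w]_m,[v]_m)}$ (type $\mathfrak t([w]_m,[v]_m)$). (GR1)–(GR3): with $I_{t,+}$, $I_{t,-}$ the sets of first resp. second coordinates of $I_t$, $\mathfrak b^+_t(w)=|\{v:(w,v)\in I_t\}|$, $\mathfrak b^-_t(w)=|\{v:(v,w)\in I_t\}|$, and $\deg^+_t(w)$, $\deg^-_t(w)$ the numbers of outgoing, resp. incoming, edges of $G_1$ at $w$ of type $t$: (GR1) $\mathfrak b^\star_t(w)\in\{0,1\}$; (GR2) $\mathfrak b^\star_t(w)$ and $\deg^\star_t(w)$ are never both non-zero; (GR3) $I_{t,-}\cap I_{t,+}=\emptyset$. Given IGS $\mathfrak R=(G_1=(S,E),\mathcal T,\mathfrak t,(I_t))$ and $\mathfrak R'=(G_1'=(S',E'),\mathcal T',\mathfrak t',(I'_{t'}))$, a mapping of IGS $\varphi:\mathfrak R\to\mathfrak R'$ is a mapping between graphs $\varphi:G_1\to G_1'$ such that: (1) if $\varphi(w_1)=\varphi(v_1)$ for some edge $\{w_1,v_1\}\in E$ of type $t$, then $\varphi(w_2)=\varphi(v_2)$ for all $(w_2,v_2)\in I_t$; (2) if $(w_1,v_1)\in E$ has type $t$ and $(\varphi(w_1),\varphi(v_1))\in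 E'$ has type $t'$, then $(\varphi(w_2),\varphi(v_2))\in I'_{t'}$ for all $(w_2,v_2)\in I_t$; (3) if $(w_1,v_1)\in E$ has type $t$ and $(\varphi(v_1),\varphi(w_1))\in E'$ has type $t'$, then $(\varphi(v_2),\varphi(w_2))\in I'_{t'}$ for all $(w_2,v_2)\in I_t$. It is an isomorphism of IGS if it is a graph isomorphism $G_1\to G_1'$ and $\varphi^{-1}$ is also a mapping of IGS. *)

theory Defs
  imports Main
begin

definition is_graph :: "'a set \<Rightarrow> ('a \<times> 'a) set \<Rightarrow> bool" where
  "is_graph V E \<longleftrightarrow> finite V \<and> V \<noteq> {} \<and> E \<subseteq> V \<times> V \<and>
     (\<forall>x y. (x, y) \<in> E \<longrightarrow> (y, x) \<notin> E)"

definition uedge :: "('a \<times> 'a) set \<Rightarrow> 'a \<Rightarrow> 'a \<Rightarrow> bool" where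
  "uedge E x y \<longleftrightarrow> (x, y) \<in> E \<or> (y, x) \<in> E"

definition graph_connected :: "'a set \<Rightarrow> ('a \<times> 'a) set \<Rightarrow> bool" where
  "graph_connected V E \<longleftrightarrow> (\<forall>x\<in>V. \<forall>y\<in>V. (x, y) \<in> (E \<union> E\<inverse>)\<^sup>*)"

definition graph_mapping ::
  "'a set \<Rightarrow> ('a \<times> 'a) set \<Rightarrow> 'b set \<Rightarrow> ('b \<times> 'b) set \<Rightarrow> ('a \<Rightarrow> 'b) \<Rightarrow> bool" where
  "graph_mapping V E V' E' f \<longleftrightarrow> f ` V \<subseteq> V' \<and>
     (\<forall>x y. uedge E x y \<longrightarrow> f x = f y \<or> uedge E' (f x) (f y))"

definition graph_iso ::
  "'a set \<Rightarrow> ('a \<times> 'a) set \<Rightarrow> 'b set \<Rightarrow> ('b \<times> 'b) set \<Rightarrow> ('a \<Rightarrow> 'b) \<Rightarrow> bool" where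
  "graph_iso V E V' E' f \<longleftrightarrow> bij_betw f V V' \<and> graph_mapping V E V' E' f \<and>
     graph_mapping V' E' V E (inv_into V f)"

record ('a, 't) igs =
  igs_S :: "'a set"
  igs_E :: "('a \<times> 'a) set"
  igs_T :: "'t set"
  igs_typ :: "'a \<times> 'a \<Rightarrow> 't"
  igs_I :: "'t \<Rightarrow> ('a \<times> 'a) set"

definition is_igs :: "('a, 't) igs \<Rightarrow> bool" where
  "is_igs R \<longleftrightarrow> is_graph (igs_S R) (igs_E R) \<and> graph_connected (igs_S R) (igs_E R) \<and>
     finite (igs_T R) \<and> igs_typ R ` igs_E R = igs_T R \<and>
     (\<forall>t\<in>igs_T R. igs_I R t \<subseteq> igs_S R \<times> igs_S R \<and> igs_I R t \<noteq> {})"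

definition b_plus :: "('a, 't) igs \<Rightarrow> 't \<Rightarrow> 'a \<Rightarrow> nat" where
  "b_plus R t w = card {v. (w, v) \<in> igs_I R t}"
definition b_minus :: "('a, 't) igs \<Rightarrow> 't \<Rightarrow> 'a \<Rightarrow> nat" where
  "b_minus R t w = card {v. (v, w) \<in> igs_I R t}"
definition deg_plus :: "('a, 't) igs \<Rightarrow> 't \<Rightarrow> 'a \<Rightarrow> nat" where
  "deg_plus R t w = card {v. (w, v) \<in> igs_E R \<and> igs_typ R (w, v) = t}"
definition deg_minus :: "('a, 't) igs \<Rightarrow> 't \<Rightarrow> 'a \<Rightarrow> nat" where
  "deg_minus R t w = card {v. (v, w) \<in> igs_E R \<and> igs_typ R (v, w) = t}"

definition GR1 :: "('a, 't) igs \<Rightarrow> bool" where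
  "GR1 R \<longleftrightarrow> (\<forall>t\<in>igs_T R. \<forall>w\<in>igs_S R. b_plus R t w \<in> {0,1} \<and> b_minus R t w \<in> {0,1})"

definition GR2 :: "('a, 't) igs \<Rightarrow> bool" where
  "GR2 R \<longleftrightarrow> (\<forall>t\<in>igs_T R. \<forall>w\<in>igs_S R.
      \<not> (b_plus R t w \<noteq> 0 \<and> deg_plus R t w \<noteq> 0) \<and>
      \<not> (b_minus R t w \<noteq> 0 \<and> deg_minus R t w \<noteq> 0))"

definition GR3 :: "('a, 't) igs \<Rightarrow> bool" where
  "GR3 R \<longleftrightarrow> (\<forall>t\<in>igs_T R. snd ` igs_I R t \<inter> fst ` igs_I R t = {})"

definition words :: "('a, 't) igs \<Rightarrow> nat \<Rightarrow> 'a list set" where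
  "words R m = {w. length w = m \<and> set w \<subseteq> igs_S R}"

text \<open>Typed edges of the replacement graph G_m: triples (w, v, type).
  Words are lists w_1 ... w_m; the last letter is appended at the end.
  For m = 1 this gives exactly the edges of G_1 with their types.\<close>
fun typed_edges :: "('a, 't) igs \<Rightarrow> nat \<Rightarrow> ('a list \<times> 'a list \<times> 't) set" where
  "typed_edges R 0 = {}"
| "typed_edges R (Suc m) =
     {(w @ [a], w @ [b], igs_typ R (a, b)) | w a b.
         w \<in> words R m \<and> (a, b) \<in> igs_E R}
   \<union> {(w @ [a], v @ [b], t) | w v t a b.
         (w, v, t) \<in> typed_edges R m \<and> (a, b) \<in> igs_I R t}"

definition edges :: "('a, 't) igs \<Rightarrow> nat \<Rightarrow> ('a list \<times> 'a list) set" where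
  "edges R m = {(w, v). \<exists>t. (w, v, t) \<in> typed_edges R m}"

definition wedge :: "'a list \<Rightarrow> 'a list \<Rightarrow> nat" where
  "wedge w v = (LEAST k. take k w \<noteq> take k v)"

definition igs_mapping :: "('a, 't) igs \<Rightarrow> ('b, 's) igs \<Rightarrow> ('a \<Rightarrow> 'b) \<Rightarrow> bool" where
  "igs_mapping R R' f \<longleftrightarrow>
     graph_mapping (igs_S R) (igs_E R) (igs_S R') (igs_E R') f \<and>
     (\<forall>w1 v1. (w1, v1) \<in> igs_E R \<and> f w1 = f v1 \<longrightarrow>
        (\<forall>(w2, v2) \<in> igs_I R (igs_typ R (w1, v1)). f w2 = f v2)) \<and>
     (\<forall>w1 v1. (w1, v1) \<in> igs_E R \<and> (f w1, f v1) \<in> igs_E R' \<longrightarrow>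
        (\<forall>(w2, v2) \<in> igs_I R (igs_typ R (w1, v1)).
           (f w2, f v2) \<in> igs_I R' (igs_typ R' (f w1, f v1)))) \<and>
     (\<forall>w1 v1. (w1, v1) \<in> igs_E R \<and> (f v1, f w1) \<in> igs_E R' \<longrightarrow>
        (\<forall>(w2, v2) \<in> igs_I R (igs_typ R (w1, v1)).
           (f v2, f w2) \<in> igs_I R' (igs_typ R' (f v1, f w1))))"

definition igs_iso :: "('a, 't) igs \<Rightarrow> ('b, 's) igs \<Rightarrow> ('a \<Rightarrow> 'b) \<Rightarrow> bool" where
  "igs_iso R R' f \<longleftrightarrow>
     graph_iso (igs_S R) (igs_E R) (igs_S R') (igs_E R') f \<and>
     igs_mapping R R' f \<and> igs_mapping R' R (inv_into (igs_S R) f)"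

end

theory Submission
  imports Defs
begin

text \<open>Every edge of \<open>G\<^sub>m\<close> has the shape \<open>(p a s, p b s')\<close> for an edge \<open>(a, b)\<close> of \<open>G\<^sub>1\<close>,
  created at level \<open>|p| + 1\<close> and then extended letter by letter along gluing rules of the
  single type \<open>t(a, b)\<close>. Conditions (1)--(3) of a mapping of IGS say that \<open>\<phi>\<close> sends these
  gluing steps to gluing steps of \<open>R'\<close> of the type of \<open>(\<phi> a, \<phi> b)\<close> (or of \<open>(\<phi> b, \<phi> a)\<close> when
  the orientation flips), or collapses them when \<open>\<phi> a = \<phi> b\<close>. Hence \<open>\<phi>\<^sub>m\<close> maps edges to
  edges or loops, and an edge that is not collapsed still has its first differing letters,
  now \<open>\<phi> a \<noteq> \<phi> b\<close>, at position \<open>|p| + 1\<close>. For an isomorphism the same argument applied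
  to \<open>\<phi>\<^sup>-\<^sup>1\<close> yields the inverse mapping.\<close>

lemma wedge_commute: "wedge w v = wedge v w"
  unfolding wedge_def by (simp add: eq_commute)

lemma wedge_append_Cons:
  assumes "x \<noteq> y"
  shows "wedge (p @ x # s) (p @ y # s') = Suc (length p)"
  unfolding wedge_def
proof (rule Least_equality)
  show "take (Suc (length p)) (p @ x # s) \<noteq> take (Suc (length p)) (p @ y # s')"
    using assms by simp
next
  fix k assume "take k (p @ x # s) \<noteq> take k (p @ y # s')"
  then show "Suc (length p) \<le> k"
    by (cases "k \<le> length p") auto
qed

lemma igs_edge_neq: "is_igs R \<Longrightarrow> (a, b) \<in> igs_E R \<Longrightarrow> a \<noteq> b"
  unfolding is_igs_def is_graph_def by blast

lemma map_in_words: "f ` igs_S R \<subseteq> igs_S R' \<Longrightarrow> w \<in> words R m \<Longrightarrow> map f w \<in> words R' m"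
  by (auto simp: words_def)

lemma typed_edges_SucE:
  assumes "(w, v, t) \<in> typed_edges R (Suc m)"
  obtains (new) u a b where "w = u @ [a]" "v = u @ [b]" "t = igs_typ R (a, b)"
      "u \<in> words R m" "(a, b) \<in> igs_E R"
    | (glued) u u' a b where "w = u @ [a]" "v = u' @ [b]" "(u, u', t) \<in> typed_edges R m"
      "(a, b) \<in> igs_I R t"
  using assms by auto

lemma typed_edges_Suc_newI:
  "u \<in> words R m \<Longrightarrow> (a, b) \<in> igs_E R \<Longrightarrow>
    (u @ [a], u @ [b], igs_typ R (a, b)) \<in> typed_edges R (Suc m)"
  by auto

lemma typed_edges_Suc_gluedI:
  "(u, u', t) \<in> typed_edges R m \<Longrightarrow> (c, d) \<in> igs_I R t \<Longrightarrow>
    (u @ [c], u' @ [d], t) \<in> typed_edges R (Suc m)"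
  by auto

lemma typed_edges_in_words:
  assumes "is_igs R" "(w, v, t) \<in> typed_edges R m"
  shows "w \<in> words R m \<and> v \<in> words R m \<and> t \<in> igs_T R"
  using assms(2)
proof (induction m arbitrary: w v t)
  case 0
  then show ?case by simp
next
  case (Suc m)
  have E: "igs_E R \<subseteq> igs_S R \<times> igs_S R" and T: "igs_typ R ` igs_E R = igs_T R"
    and I: "\<And>t. t \<in> igs_T R \<Longrightarrow> igs_I R t \<subseteq> igs_S R \<times> igs_S R"
    using assms(1) unfolding is_igs_def is_graph_def by auto
  from Suc.prems show ?case
  proof (cases rule: typed_edges_SucE)
    case (new u a b)
    then show ?thesis using E T by (auto simp: words_def)
  next
    case (glued u u' a b)
    with Suc.IH have "u \<in> words R m" "u' \<in> words R m" "t \<in> igs_T R" by auto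
    then show ?thesis using glued I by (auto simp: words_def)
  qed
qed

lemma typed_edge_map:
  assumes M: "igs_mapping R R' f" and "(w, v, t) \<in> typed_edges R m"
  shows "\<exists>p a b s s'. w = p @ a # s \<and> v = p @ b # s' \<and> (a, b) \<in> igs_E R \<and>
     igs_typ R (a, b) = t \<and>
     (f a = f b \<longrightarrow> map f w = map f v) \<and>
     ((f a, f b) \<in> igs_E R' \<longrightarrow>
        (map f w, map f v, igs_typ R' (f a, f b)) \<in> typed_edges R' m) \<and>
     ((f b, f a) \<in> igs_E R' \<longrightarrow>
        (map f v, map f w, igs_typ R' (f b, f a)) \<in> typed_edges R' m)"
  using assms(2)
proof (induction m arbitrary: w v t)
  case 0
  then show ?case by simp
next
  case (Suc m)
  from Suc.prems show ?case
  proof (cases rule: typed_edges_SucE)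
    case (new u a b)
    have "f ` igs_S R \<subseteq> igs_S R'"
      using M unfolding igs_mapping_def graph_mapping_def by blast
    then have "map f u \<in> words R' m" using new(4) by (rule map_in_words)
    then show ?thesis using new
      by (intro exI[of _ u] exI[of _ a] exI[of _ b] exI[of _ "[]"] exI[of _ "[]"])
        (simp add: typed_edges_Suc_newI)
  next
    case (glued u u' c d)
    from Suc.IH[OF glued(3)] obtain p a b s s' where
      ab: "u = p @ a # s" "u' = p @ b # s'" "(a, b) \<in> igs_E R" "igs_typ R (a, b) = t"
      and IH: "f a = f b \<longrightarrow> map f u = map f u'"
        "(f a, f b) \<in> igs_E R' \<longrightarrow>
          (map f u, map f u', igs_typ R' (f a, f b)) \<in> typed_edges R' m"
        "(f b, f a) \<in> igs_E R' \<longrightarrow>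
          (map f u', map f u, igs_typ R' (f b, f a)) \<in> typed_edges R' m"
      by blast
    have cd: "(c, d) \<in> igs_I R (igs_typ R (a, b))" using glued(4) ab(4) by simp
    have "f a = f b \<longrightarrow> f c = f d"
      using M ab(3) cd unfolding igs_mapping_def by fast
    moreover have "(f a, f b) \<in> igs_E R' \<longrightarrow> (f c, f d) \<in> igs_I R' (igs_typ R' (f a, f b))"
      using M ab(3) cd unfolding igs_mapping_def by fast
    moreover have "(f b, f a) \<in> igs_E R' \<longrightarrow> (f d, f c) \<in> igs_I R' (igs_typ R' (f b, f a))"
      using M ab(3) cd unfolding igs_mapping_def by fast
    ultimately show ?thesis using glued(1,2) ab IH
      by (intro exI[of _ p] exI[of _ a] exI[of _ b] exI[of _ "s @ [c]"] exI[of _ "s' @ [d]"])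
        (simp add: typed_edges_Suc_gluedI)
  qed
qed

lemma graph_mapping_map_edges:
  assumes M: "igs_mapping R R' f"
  shows "graph_mapping (words R m) (edges R m) (words R' m) (edges R' m) (map f)"
proof -
  have GM: "graph_mapping (igs_S R) (igs_E R) (igs_S R') (igs_E R') f"
    using M unfolding igs_mapping_def by blast
  have edge: "map f w = map f v \<or> uedge (edges R' m) (map f w) (map f v)"
    if wv: "(w, v, t) \<in> typed_edges R m" for w v t
  proof -
    obtain a b where "(a, b) \<in> igs_E R"
      and "f a = f b \<longrightarrow> map f w = map f v"
      and "(f a, f b) \<in> igs_E R' \<longrightarrow>
        (map f w, map f v, igs_typ R' (f a, f b)) \<in> typed_edges R' m"
      and "(f b, f a) \<in> igs_E R' \<longrightarrow>
        (map f v, map f w, igs_typ R' (f b, f a)) \<in> typed_edges R' m"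
      using typed_edge_map[OF M wv] by blast
    moreover have "f a = f b \<or> uedge (igs_E R') (f a) (f b)"
      using GM \<open>(a, b) \<in> igs_E R\<close> unfolding graph_mapping_def uedge_def by blast
    ultimately show ?thesis unfolding uedge_def edges_def by blast
  qed
  have "f ` igs_S R \<subseteq> igs_S R'" using GM unfolding graph_mapping_def by blast
  then have "map f ` words R m \<subseteq> words R' m" using map_in_words by blast
  moreover have "map f w = map f v \<or> uedge (edges R' m) (map f w) (map f v)"
    if "uedge (edges R m) w v" for w v
    using that edge[of w v] edge[of v w] unfolding uedge_def[of "edges R m"] edges_def
    by (auto simp: uedge_def)
  ultimately show ?thesis unfolding graph_mapping_def by blast
qed

lemma wedge_map_edge:
  assumes "is_igs R" "igs_mapping R R' f" "(w, v) \<in> edges R m"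
  shows "map f w = map f v \<or> wedge (map f w) (map f v) = wedge w v"
proof -
  obtain t where "(w, v, t) \<in> typed_edges R m" using assms(3) unfolding edges_def by blast
  then obtain p a b s s' where
    wv: "w = p @ a # s" "v = p @ b # s'" "(a, b) \<in> igs_E R"
    and collapse: "f a = f b \<longrightarrow> map f w = map f v"
    using typed_edge_map[OF assms(2)] by blast
  have "a \<noteq> b" using igs_edge_neq[OF assms(1) wv(3)] .
  then have "f a \<noteq> f b \<Longrightarrow> wedge (map f w) (map f v) = wedge w v"
    by (simp add: wv wedge_append_Cons)
  then show ?thesis using collapse by blast
qed

lemma graph_mapping_cong:
  assumes f: "graph_mapping V E V' E' f" and E: "E \<subseteq> V \<times> V"
    and fg: "\<And>x. x \<in> V \<Longrightarrow> g x = f x"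
  shows "graph_mapping V E V' E' g"
  unfolding graph_mapping_def
proof (intro conjI allI impI image_subsetI)
  fix x assume "x \<in> V"
  then show "g x \<in> V'" using f fg unfolding graph_mapping_def by auto
next
  fix x y assume xy: "uedge E x y"
  then have "x \<in> V" "y \<in> V" using E unfolding uedge_def by auto
  then show "g x = g y \<or> uedge E' (g x) (g y)"
    using f xy fg unfolding graph_mapping_def by simp
qed

lemma graph_iso_map_edges:
  assumes R': "is_igs R'" and I: "igs_iso R R' f"
  shows "graph_iso (words R m) (edges R m) (words R' m) (edges R' m) (map f)"
proof -
  define g where "g = inv_into (igs_S R) f"
  have bij: "bij_betw f (igs_S R) (igs_S R')" and M: "igs_mapping R R' f"
    and M': "igs_mapping R' R g"
    using I unfolding igs_iso_def graph_iso_def g_def by auto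
  have gf: "map g (map f w) = w" if "w \<in> words R m" for w
    using that bij_betw_inv_into_left[OF bij]
    by (auto simp: g_def words_def subset_iff intro!: map_idI)
  have fg: "map f (map g w) = w" if "w \<in> words R' m" for w
    using that bij_betw_inv_into_right[OF bij]
    by (auto simp: g_def words_def subset_iff intro!: map_idI)
  have fS: "f ` igs_S R \<subseteq> igs_S R'" and gS: "g ` igs_S R' \<subseteq> igs_S R"
    using bij bij_betw_inv_into[OF bij] unfolding g_def bij_betw_def by auto
  have bij_m: "bij_betw (map f) (words R m) (words R' m)"
  proof (rule bij_betw_byWitness)
    show "map f ` words R m \<subseteq> words R' m" "map g ` words R' m \<subseteq> words R m"
      using map_in_words[OF fS] map_in_words[OF gS] by blast+
  qed (use gf fg in blast)+
  have "inv_into (words R m) (map f) y = map g y" if "y \<in> words R' m" for y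
    using bij_betw_inv_into_left[OF bij_m, of "map g y"] fg[OF that] map_in_words[OF gS that]
    by simp
  moreover have "edges R' m \<subseteq> words R' m \<times> words R' m"
    using typed_edges_in_words[OF R'] unfolding edges_def by blast
  ultimately have "graph_mapping (words R' m) (edges R' m) (words R m) (edges R m)
      (inv_into (words R m) (map f))"
    using graph_mapping_cong[OF graph_mapping_map_edges[OF M']] by blast
  with bij_m graph_mapping_map_edges[OF M] show ?thesis
    unfolding graph_iso_def by blast
qed

theorem proposition3p12:
  fixes R :: "('a, 't) igs" and R' :: "('b, 's) igs" and \<phi> :: "'a \<Rightarrow> 'b"
  assumes "is_igs R" "GR1 R" "GR2 R" "GR3 R"
    and "is_igs R'" "GR1 R'" "GR2 R'" "GR3 R'"
    and "igs_mapping R R' \<phi>"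
  shows "(\<forall>m\<ge>1. graph_mapping (words R m) (edges R m) (words R' m) (edges R' m) (map \<phi>))
    \<and> (igs_iso R R' \<phi> \<longrightarrow>
         (\<forall>m\<ge>1. graph_iso (words R m) (edges R m) (words R' m) (edges R' m) (map \<phi>)))
    \<and> (\<forall>m\<ge>1. \<forall>w v. uedge (edges R m) w v \<longrightarrow>
         map \<phi> w = map \<phi> v \<or> wedge (map \<phi> w) (map \<phi> v) = wedge w v)"
proof (intro conjI allI impI)
  fix m
  show "graph_mapping (words R m) (edges R m) (words R' m) (edges R' m) (map \<phi>)"
    using graph_mapping_map_edges[OF assms(9)] .
  assume "igs_iso R R' \<phi>"
  then show "graph_iso (words R m) (edges R m) (words R' m) (edges R' m) (map \<phi>)"
    using graph_iso_map_edges[OF assms(5)] by blast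
next
  fix m w v
  assume "uedge (edges R m) w v"
  then have "(w, v) \<in> edges R m \<or> (v, w) \<in> edges R m" unfolding uedge_def .
  then show "map \<phi> w = map \<phi> v \<or> wedge (map \<phi> w) (map \<phi> v) = wedge w v"
    using wedge_map_edge[OF assms(1,9)] wedge_commute[of "map \<phi> w"] wedge_commute[of w]
    by metis
qed

end
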